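(* Let $S=\{\rho_1=0<\rho_2<\cdots\}$ be a numerical semigroup. For a positive integer $d$ let $S_d=\{\rho\in S:\ \#A[\rho]=d\}$. The following are equivalent: (a) $\#A[2\rho_i]=2i-1$ for every positive integer $i$; (b) $\#S_d=1$ for every odd positive integer $d$; (c) $S$ is an Arf semigroup.
   Context: A numerical semigroup is a submonoid $S$ of $(\mathbb{N}_0,+)$ with finite complement, with elements listed increasingly. $S$ is Arf if $\rho_i+\rho_j-\rho_k\in S$ for all positive integers $i\ge j\ge k$. For $\rho\in S$, $A[\rho]=\{p\in S:\ \rho-p\in S\}$. *)

theory Defs
  imports Main "HOL-Library.Infinite_Set"
begin

definition numerical_semigroup :: "nat set \<Rightarrow> bool" where
  "numerical_semigroup S \<longleftrightarrow>
     0 \<in> S \<and> (\<forall>a\<in>S. \<forall>b\<in>S. a + b \<in> S) \<and> finite (UNIV - S)"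

definition rho :: "nat set \<Rightarrow> nat \<Rightarrow> nat" where
  "rho S i = Infinite_Set.enumerate S (i - 1)"

text \<open>A[r] = {p in S. r - p in S} (with p \<le> r, since r - p must be a natural number).\<close>
definition Aset :: "nat set \<Rightarrow> nat \<Rightarrow> nat set" where
  "Aset S r = {p \<in> S. p \<le> r \<and> r - p \<in> S}"

definition Sd :: "nat set \<Rightarrow> nat \<Rightarrow> nat set" where
  "Sd S d = {r \<in> S. card (Aset S r) = d}"

definition Arf :: "nat set \<Rightarrow> bool" where
  "Arf S \<longleftrightarrow> (\<forall>i j k. 0 < k \<and> k \<le> j \<and> j \<le> i \<longrightarrow>
                      rho S i + rho S j - rho S k \<in> S)"

end

theory Submission
  imports Defs
begin

(* Pairing p with r - p shows that #A[r] is odd exactly when r = 2x with x in S, and then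
   #A[2x] = 2 g + 1, where g counts the y < x in S whose reflection 2x - y through x lies in S.
   For x = rho_(n+1) there are only n candidates y, so g(n) <= n. Condition (a) says g(n) = n for
   all n, and condition (b) says that g is injective, which for g(n) <= n again means g(n) = n.
   Both therefore say that S is closed under the reflections (x, y) |-> 2x - y for y <= x.
   This reflection property characterises Arf semigroups: for z in S the shifted set
   {t. z + t in S} inherits it, and a cofinite set T containing 0 with the reflection property is
   closed under addition (by induction on the number of gaps, passing to {t. m + t in T} for the
   least positive m in T), so x + y - z = z + ((x - z) + (y - z)) lies in S. *)

definition reflection_closed :: "nat set \<Rightarrow> bool" where
  "reflection_closed T \<longleftrightarrow> (\<forall>t\<in>T. \<forall>u\<in>T. u \<le> t \<longrightarrow> 2 * t - u \<in> T)"

lemma reflection_closedD: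
  "reflection_closed T \<Longrightarrow> t \<in> T \<Longrightarrow> u \<in> T \<Longrightarrow> u \<le> t \<Longrightarrow> 2 * t - u \<in> T"
  unfolding reflection_closed_def by blast

lemma reflection_closed_shift:
  assumes "reflection_closed T"
  shows "reflection_closed {x. z + x \<in> T}"
  unfolding reflection_closed_def
proof (intro ballI impI)
  fix t u assume "t \<in> {x. z + x \<in> T}" "u \<in> {x. z + x \<in> T}" "u \<le> t"
  then have "2 * (z + t) - (z + u) \<in> T"
    using reflection_closedD[OF assms, of "z + t" "z + u"] by simp
  moreover have "2 * (z + t) - (z + u) = z + (2 * t - u)"
    using \<open>u \<le> t\<close> by simp
  ultimately show "2 * t - u \<in> {x. z + x \<in> T}" by simp
qed

lemma finite_Compl_shift:
  assumes "finite (- T)"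
  shows "finite (- {x. z + x \<in> (T :: nat set)})"
proof (rule finite_subset)
  show "- {x. z + x \<in> T} \<subseteq> (\<lambda>g. g - z) ` (- T)"
    by (auto intro: image_eqI[where x = "z + _"])
qed (use assms in simp)

lemma reflection_closed_0_1_eq_UNIV:
  assumes "0 \<in> T" "1 \<in> T" "reflection_closed T"
  shows "T = UNIV"
proof -
  have "n \<in> T \<and> Suc n \<in> T" for n
  proof (induction n)
    case (Suc n)
    then have "2 * Suc n - n \<in> T"
      using reflection_closedD[OF assms(3), of "Suc n" n] by simp
    then show ?case using Suc by (simp add: numeral_2_eq_2)
  qed (use assms in simp)
  then show ?thesis by blast
qed

lemma reflection_closed_add:
  assumes "finite (- T)" "0 \<in> T" "reflection_closed T" "a \<in> T" "b \<in> T"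
  shows "a + b \<in> T"
  using assms
proof (induction "card (- T)" arbitrary: T a b rule: less_induct)
  case less
  show ?case
  proof (cases "a = 0 \<or> b = 0")
    case True
    then show ?thesis using less.prems by auto
  next
    case False
    define m where "m = (LEAST t. t \<in> T \<and> 0 < t)"
    have m: "m \<in> T" "0 < m"
      using LeastI[of "\<lambda>t. t \<in> T \<and> 0 < t" a] False less.prems(4) by (auto simp: m_def)
    have m_le: "m \<le> t" if "t \<in> T" "0 < t" for t
      using that by (simp add: m_def Least_le)
    show ?thesis
    proof (cases "m = 1")
      case True
      then show ?thesis
        using reflection_closed_0_1_eq_UNIV less.prems m by blast
    next
      case False
      define T' where "T' = {x. m + x \<in> T}"
      have "1 \<notin> T"
        using m m_le False by fastforce
      have "(+) m ` (- T') \<subseteq> - T - {1}"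
        using m False by (auto simp: T'_def)
      then have "card ((+) m ` (- T')) \<le> card (- T - {1})"
        using less.prems(1) by (simp add: card_mono)
      then have "card (- T') \<le> card (- T - {1})"
        by (simp add: card_image)
      also have "\<dots> < card (- T)"
        using \<open>1 \<notin> T\<close> less.prems(1) by (intro card_Diff1_less) auto
      finally have "card (- T') < card (- T)" .
      have "finite (- T')" "reflection_closed T'"
        unfolding T'_def
        using finite_Compl_shift reflection_closed_shift less.prems(1,3) by auto
      have "0 \<in> T'" "m \<in> T'"
        using m reflection_closedD[OF less.prems(3) m(1) less.prems(2)]
        by (simp_all add: T'_def mult_2)
      note IH = less.hyps[OF \<open>card (- T') < card (- T)\<close> \<open>finite (- T')\<close> \<open>0 \<in> T'\<close>
          \<open>reflection_closed T'\<close>]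
      have "m \<le> a" "m \<le> b"
        using m_le less.prems(4,5) \<open>\<not> (a = 0 \<or> b = 0)\<close> by auto
      then have "a - m \<in> T'" "b - m \<in> T'"
        using less.prems(4,5) by (simp_all add: T'_def)
      then have "(a - m) + (b - m) + m \<in> T'"
        using IH \<open>m \<in> T'\<close> by blast
      then show ?thesis
        using \<open>m \<le> a\<close> \<open>m \<le> b\<close> by (simp add: T'_def)
    qed
  qed
qed

lemma numerical_semigroup_infinite:
  "numerical_semigroup S \<Longrightarrow> infinite S"
  unfolding numerical_semigroup_def by (metis finite_Un Un_Diff_cancel2 infinite_UNIV_nat)

lemma rho_Suc: "rho S (Suc n) = enumerate S n"
  by (simp add: rho_def)

lemma Arf_iff_elementwise:
  assumes "infinite S"
  shows "Arf S \<longleftrightarrow> (\<forall>x\<in>S. \<forall>y\<in>S. \<forall>z\<in>S. z \<le> y \<longrightarrow> y \<le> x \<longrightarrow> x + y - z \<in> S)"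
proof
  assume Arf: "Arf S"
  show "\<forall>x\<in>S. \<forall>y\<in>S. \<forall>z\<in>S. z \<le> y \<longrightarrow> y \<le> x \<longrightarrow> x + y - z \<in> S"
  proof (intro ballI impI)
    fix x y z assume "x \<in> S" "y \<in> S" "z \<in> S" "z \<le> y" "y \<le> x"
    then obtain i j k where "x = enumerate S i" "y = enumerate S j" "z = enumerate S k"
      using enumerate_Ex[OF assms] by metis
    with \<open>z \<le> y\<close> \<open>y \<le> x\<close> show "x + y - z \<in> S"
      using Arf assms unfolding Arf_def
      by (metis enumerate_mono_le_iff rho_Suc Suc_le_mono zero_less_Suc)
  qed
next
  assume "\<forall>x\<in>S. \<forall>y\<in>S. \<forall>z\<in>S. z \<le> y \<longrightarrow> y \<le> x \<longrightarrow> x + y - z \<in> S"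
  then show "Arf S"
    using assms unfolding Arf_def rho_def
    by (simp add: enumerate_in_set diff_le_mono)
qed

lemma Arf_iff_reflection_closed:
  assumes "numerical_semigroup S"
  shows "Arf S \<longleftrightarrow> reflection_closed S"
proof -
  have "reflection_closed S \<longleftrightarrow>
        (\<forall>x\<in>S. \<forall>y\<in>S. \<forall>z\<in>S. z \<le> y \<longrightarrow> y \<le> x \<longrightarrow> x + y - z \<in> S)"
  proof
    assume refl: "reflection_closed S"
    have "finite (- S)"
      using assms by (simp add: numerical_semigroup_def Compl_eq_Diff_UNIV)
    show "\<forall>x\<in>S. \<forall>y\<in>S. \<forall>z\<in>S. z \<le> y \<longrightarrow> y \<le> x \<longrightarrow> x + y - z \<in> S"
    proof (intro ballI impI)
      fix x y z assume "x \<in> S" "y \<in> S" "z \<in> S" "z \<le> y" "y \<le> x"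
      have "(x - z) + (y - z) \<in> {t. z + t \<in> S}"
      proof (rule reflection_closed_add)
        show "finite (- {t. z + t \<in> S})" by (rule finite_Compl_shift) fact
        show "reflection_closed {t. z + t \<in> S}" by (rule reflection_closed_shift) fact
      qed (use \<open>x \<in> S\<close> \<open>y \<in> S\<close> \<open>z \<in> S\<close> \<open>z \<le> y\<close> \<open>y \<le> x\<close> in auto)
      then show "x + y - z \<in> S"
        using \<open>z \<le> y\<close> \<open>y \<le> x\<close> by simp
    qed
  next
    assume "\<forall>x\<in>S. \<forall>y\<in>S. \<forall>z\<in>S. z \<le> y \<longrightarrow> y \<le> x \<longrightarrow> x + y - z \<in> S"
    then show "reflection_closed S"
      unfolding reflection_closed_def mult_2 by blast
  qed
  then show ?thesis
    using Arf_iff_elementwise[OF numerical_semigroup_infinite[OF assms]] by simp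
qed

definition reflectable_below :: "nat set \<Rightarrow> nat \<Rightarrow> nat set" where
  "reflectable_below S x = {y \<in> S. y < x \<and> 2 * x - y \<in> S}"

lemma card_Aset:
  "card (Aset S r) = 2 * card {p \<in> S. 2 * p < r \<and> r - p \<in> S} + card {p \<in> S. 2 * p = r}"
proof -
  define L where "L = {p \<in> S. 2 * p < r \<and> r - p \<in> S}"
  define M where "M = {p \<in> S. 2 * p = r}"
  let ?R = "(\<lambda>p. r - p) ` L"
  have fin: "finite L" "finite ?R" "finite M"
    by (auto simp: L_def M_def intro: finite_subset[where B = "{..r}"])
  have "Aset S r = (L \<union> ?R) \<union> M"
  proof (intro equalityI subsetI)
    fix p assume "p \<in> Aset S r"
    then show "p \<in> (L \<union> ?R) \<union> M"
      by (cases "2 * p < r"; cases "2 * p = r")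
        (auto simp: Aset_def L_def M_def image_iff intro: exI[where x = "r - p"])
  qed (auto simp: Aset_def L_def M_def)
  moreover have "card ((L \<union> ?R) \<union> M) = card (L \<union> ?R) + card M"
    by (rule card_Un_disjoint) (use fin in \<open>auto simp: L_def M_def\<close>)
  moreover have "card (L \<union> ?R) = card L + card ?R"
    by (rule card_Un_disjoint) (use fin in \<open>auto simp: L_def\<close>)
  moreover have "card ?R = card L"
    by (rule card_image) (auto simp: L_def inj_on_def)
  ultimately show ?thesis
    by (simp add: L_def M_def)
qed

lemma card_Aset_double:
  assumes "x \<in> S"
  shows "card (Aset S (2 * x)) = 2 * card (reflectable_below S x) + 1"
proof -
  have "{p \<in> S. 2 * p = 2 * x} = {x}"
    using assms by auto
  then show ?thesis
    using card_Aset[of S "2 * x"] by (simp add: reflectable_below_def)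
qed

lemma odd_card_Aset_imp_double:
  assumes "odd (card (Aset S r))"
  shows "\<exists>x\<in>S. r = 2 * x"
proof (rule ccontr)
  assume "\<not> ?thesis"
  then have no_half: "{p \<in> S. 2 * p = r} = {}"
    by auto
  show False
    using assms card_Aset[of S r, unfolded no_half] by simp
qed

lemma reflectable_below_subset: "reflectable_below S x \<subseteq> {y \<in> S. y < x}"
  by (auto simp: reflectable_below_def)

lemma finite_less_in: "finite {y \<in> S. y < (x :: nat)}"
  by (rule finite_subset[of _ "{..<x}"]) auto

lemma card_reflectable_below_le:
  "card (reflectable_below S x) \<le> card {y \<in> S. y < x}"
  by (rule card_mono[OF finite_less_in reflectable_below_subset])

lemma card_reflectable_below_eq_iff:
  "card (reflectable_below S x) = card {y \<in> S. y < x} \<longleftrightarrow> (\<forall>y\<in>S. y < x \<longrightarrow> 2 * x - y \<in> S)"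
proof -
  have "card (reflectable_below S x) = card {y \<in> S. y < x} \<longleftrightarrow>
        reflectable_below S x = {y \<in> S. y < x}"
    using card_subset_eq[OF finite_less_in reflectable_below_subset] by (intro iffI) simp_all
  also have "\<dots> \<longleftrightarrow> (\<forall>y\<in>S. y < x \<longrightarrow> 2 * x - y \<in> S)"
    unfolding reflectable_below_def set_eq_iff by auto
  finally show ?thesis .
qed

lemma card_less_enumerate:
  fixes S :: "nat set"
  assumes "infinite S"
  shows "card {y \<in> S. y < enumerate S n} = n"
proof -
  have "{y \<in> S. y < enumerate S n} = enumerate S ` {..<n}"
  proof (intro equalityI subsetI)
    fix y assume "y \<in> {y \<in> S. y < enumerate S n}"
    moreover obtain m where "y = enumerate S m"
      using calculation enumerate_Ex[OF assms] by blast
    ultimately show "y \<in> enumerate S ` {..<n}"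
      using assms by auto
  qed (use assms enumerate_in_set in auto)
  moreover have "inj_on (enumerate S) {..<n}"
    using inj_enumerate[OF assms] by (rule inj_on_subset) simp
  ultimately show ?thesis
    by (simp add: card_image)
qed

lemma card_reflectable_below_enumerate_le:
  assumes "infinite S"
  shows "card (reflectable_below S (enumerate S n)) \<le> n"
  using card_reflectable_below_le[of S "enumerate S n"] card_less_enumerate[OF assms, of n] by simp

lemma card_reflectable_below_enumerate_eq_iff:
  assumes "infinite S"
  shows "card (reflectable_below S (enumerate S n)) = n \<longleftrightarrow>
         (\<forall>y\<in>S. y < enumerate S n \<longrightarrow> 2 * enumerate S n - y \<in> S)"
  using card_reflectable_below_eq_iff[of S "enumerate S n"] card_less_enumerate[OF assms, of n]
  by simp

lemma reflection_closed_iff_card_reflectable_below: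
  assumes "infinite S"
  shows "reflection_closed S \<longleftrightarrow> (\<forall>n. card (reflectable_below S (enumerate S n)) = n)"
proof -
  have "reflection_closed S \<longleftrightarrow> (\<forall>x\<in>S. \<forall>y\<in>S. y < x \<longrightarrow> 2 * x - y \<in> S)"
    unfolding reflection_closed_def le_less by auto
  also have "\<dots> \<longleftrightarrow> (\<forall>x\<in>range (enumerate S). \<forall>y\<in>S. y < x \<longrightarrow> 2 * x - y \<in> S)"
    by (simp only: range_enumerate[OF assms])
  also have "\<dots> \<longleftrightarrow> (\<forall>n. card (reflectable_below S (enumerate S n)) = n)"
    by (simp add: card_reflectable_below_enumerate_eq_iff[OF assms])
  finally show ?thesis .
qed

lemma inj_le_imp_eq_self:
  fixes g :: "nat \<Rightarrow> nat"
  assumes "inj g" "\<And>n. g n \<le> n"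
  shows "g n = n"
proof (induction n rule: less_induct)
  case (less n)
  show ?case
  proof (rule ccontr)
    assume "g n \<noteq> n"
    then have "g (g n) = g n"
      using assms(2)[of n] less by (simp add: order_less_le)
    then show False
      using \<open>g n \<noteq> n\<close> injD[OF assms(1)] by blast
  qed
qed

lemma card_fibres_eq_1_iff_eq_self:
  fixes g :: "nat \<Rightarrow> nat"
  assumes "\<And>n. g n \<le> n"
  shows "(\<forall>k. card {n. g n = k} = 1) \<longleftrightarrow> (\<forall>n. g n = n)"
proof
  assume "\<forall>k. card {n. g n = k} = 1"
  then have "inj g"
  proof (intro injI)
    fix a b assume "g a = g b"
    moreover obtain c where "{n. g n = g b} = {c}"
      using \<open>\<forall>k. card {n. g n = k} = 1\<close> card_1_singletonE by blast
    ultimately show "a = b"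
      by (auto simp: set_eq_iff)
  qed
  then show "\<forall>n. g n = n"
    using inj_le_imp_eq_self assms by blast
qed simp

lemma card_Sd_odd:
  assumes "numerical_semigroup S"
  shows "card (Sd S (2 * k + 1)) = card {n. card (reflectable_below S (enumerate S n)) = k}"
proof -
  have inf: "infinite S"
    using assms by (rule numerical_semigroup_infinite)
  let ?N = "{n. card (reflectable_below S (enumerate S n)) = k}"
  have "Sd S (2 * k + 1) = (\<lambda>n. 2 * enumerate S n) ` ?N"
  proof (intro equalityI subsetI)
    fix r assume "r \<in> Sd S (2 * k + 1)"
    then have card_r: "card (Aset S r) = 2 * k + 1"
      by (simp add: Sd_def)
    then obtain x where "x \<in> S" "r = 2 * x"
      using odd_card_Aset_imp_double[of S r] by auto
    moreover obtain n where "enumerate S n = x"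
      using enumerate_Ex[OF inf \<open>x \<in> S\<close>] by blast
    ultimately have "r = 2 * enumerate S n" "n \<in> ?N"
      using card_r card_Aset_double[OF \<open>x \<in> S\<close>] by simp_all
    then show "r \<in> (\<lambda>n. 2 * enumerate S n) ` ?N"
      by blast
  next
    fix r assume "r \<in> (\<lambda>n. 2 * enumerate S n) ` ?N"
    then obtain n where r: "r = 2 * enumerate S n" and "n \<in> ?N"
      by blast
    have "enumerate S n \<in> S"
      using inf by (rule enumerate_in_set)
    then have "2 * enumerate S n \<in> S"
      using assms by (simp add: numerical_semigroup_def mult_2)
    then show "r \<in> Sd S (2 * k + 1)"
      using \<open>n \<in> ?N\<close> card_Aset_double[OF \<open>enumerate S n \<in> S\<close>] by (simp add: Sd_def r)
  qed
  moreover have "inj_on (\<lambda>n. 2 * enumerate S n) ?N"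
    using inj_enumerate[OF inf] by (simp add: inj_on_def)
  ultimately show ?thesis
    by (simp add: card_image)
qed

lemma double_rho_iff_reflection_closed:
  assumes "numerical_semigroup S"
  shows "(\<forall>i>0. card (Aset S (2 * rho S i)) = 2 * i - 1) \<longleftrightarrow> reflection_closed S"
proof -
  have inf: "infinite S"
    using assms by (rule numerical_semigroup_infinite)
  have "(\<forall>i>0. card (Aset S (2 * rho S i)) = 2 * i - 1) \<longleftrightarrow>
        (\<forall>n. card (Aset S (2 * rho S (Suc n))) = 2 * Suc n - 1)"
    by (metis gr0_implies_Suc zero_less_Suc)
  also have "\<dots> \<longleftrightarrow> (\<forall>n. card (reflectable_below S (enumerate S n)) = n)"
    by (simp add: rho_Suc card_Aset_double enumerate_in_set[OF inf])
  finally show ?thesis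
    using reflection_closed_iff_card_reflectable_below[OF inf] by simp
qed

lemma odd_Sd_singleton_iff_reflection_closed:
  assumes "numerical_semigroup S"
  shows "(\<forall>d. odd d \<longrightarrow> card (Sd S d) = 1) \<longleftrightarrow> reflection_closed S"
proof -
  have inf: "infinite S"
    using assms by (rule numerical_semigroup_infinite)
  have "(\<forall>d. odd d \<longrightarrow> card (Sd S d) = 1) \<longleftrightarrow> (\<forall>k. card (Sd S (2 * k + 1)) = 1)"
    by (auto elim!: oddE)
  also have "\<dots> \<longleftrightarrow> (\<forall>k. card {n. card (reflectable_below S (enumerate S n)) = k} = 1)"
    by (simp only: card_Sd_odd[OF assms])
  also have "\<dots> \<longleftrightarrow> (\<forall>n. card (reflectable_below S (enumerate S n)) = n)"
    by (rule card_fibres_eq_1_iff_eq_self)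
      (rule card_reflectable_below_enumerate_le[OF inf])
  finally show ?thesis
    using reflection_closed_iff_card_reflectable_below[OF inf] by simp
qed

theorem mainTheorem12:
  fixes S :: "nat set"
  assumes "numerical_semigroup S"
  shows "((\<forall>i>0. card (Aset S (2 * rho S i)) = 2 * i - 1)
            \<longleftrightarrow> (\<forall>d. odd d \<longrightarrow> card (Sd S d) = 1))
       \<and> ((\<forall>d. odd d \<longrightarrow> card (Sd S d) = 1) \<longleftrightarrow> Arf S)"
  using double_rho_iff_reflection_closed[OF assms] odd_Sd_singleton_iff_reflection_closed[OF assms]
    Arf_iff_reflection_closed[OF assms]
  by simp

end
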